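(* For any non-negative integer $L$ and positive integers $p'$, $p$ such that $p' > p$, \[ D_{p',s}\left(\left\lceil\frac{L+r-s}{2}\right\rceil,\left\lfloor\frac{L-r+s}{2}\right\rfloor;p-r,r\right) = \sum_{j\in\mathbb{Z}}\left\{q^{j^2pp'+(rp'-sp)j}\begin{bmatrix}L\\ \left\lfloor\frac{L-r+s}{2}\right\rfloor-jp'\end{bmatrix}_{q}-q^{(jp+r)(jp'+s)}\begin{bmatrix}L\\ \left\lfloor\frac{L-r-s}{2}\right\rfloor-jp'\end{bmatrix}_{q}\right\}\ge 0, \] where $r$ and $s$ are integers such that $0 < r < p$ and $0 < s < p'$.
   Context: The $q$-binomial coefficient is $\begin{bmatrix}m\\ n\end{bmatrix}_q=\frac{(q;q)_m}{(q;q)_n(q;q)_{m-n}}$ for $m\ge n\ge 0$ and $0$ otherwise, where $(a;q)_L=\prod_{k=0}^{L-1}(1-aq^k)$. For integers $K,i$ and parameters $N,M,\alpha,\beta$, \[ D_{K,i}(N,M;\alpha,\beta)=\sum_{j\in\mathbb{Z}}\left\{q^{j((\alpha+\beta)Kj+K\beta-(\alpha+\beta)i)}\begin{bmatrix}M+N\\ M-Kj\end{bmatrix}_{q}-q^{((\alpha+\beta)j+\beta)(Kj+i)}\begin{bmatrix}M+N\\ M-Kj-i\end{bmatrix}_{q}\right\}. \] (Andrews et al. showed this is the generating function of partitions with at most $M$ parts, largest part at most $N$, and hook-difference restrictions on the $(1-\beta)$th and $(\alpha-1)$th diagonals, for $\alpha,\beta$ non-negative integers, $0<i<K$, $\beta-i\le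 N-M\le K-\alpha-i$.) "$P(q)\ge 0$" means the power series $P(q)$ has non-negative coefficients. *)

theory Defs
  imports "HOL-Computational_Algebra.Formal_Laurent_Series"
begin

text \<open>Power series in q are modelled as formal Laurent series over the rationals
  (a field, so the quotient defining the q-binomial makes sense).\<close>

definition qpow :: "int \<Rightarrow> rat fls" where
  "qpow e = fls_X_intpow e"

definition qpoch :: "nat \<Rightarrow> rat fls" where
  "qpoch L = (\<Prod>k<L. 1 - qpow (int k + 1))"

definition qbinom :: "int \<Rightarrow> int \<Rightarrow> rat fls" where
  "qbinom m n = (if 0 \<le> n \<and> n \<le> m
      then qpoch (nat m) / (qpoch (nat n) * qpoch (nat (m - n))) else 0)"

text \<open>D_{K,i}(N,M;alpha,beta).  The sum over all integers j is written as a sum over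
  the j for which the q-binomial is nonzero (all other summands vanish); for K > 0
  these index sets are finite.\<close>
definition D :: "int \<Rightarrow> int \<Rightarrow> int \<Rightarrow> int \<Rightarrow> int \<Rightarrow> int \<Rightarrow> rat fls" where
  "D K i N M \<alpha> \<beta> =
     (\<Sum>j\<in>{j. 0 \<le> M - K*j \<and> M - K*j \<le> M + N}.
        qpow (j*((\<alpha>+\<beta>)*K*j + K*\<beta> - (\<alpha>+\<beta>)*i)) * qbinom (M + N) (M - K*j))
   - (\<Sum>j\<in>{j. 0 \<le> M - K*j - i \<and> M - K*j - i \<le> M + N}.
        qpow (((\<alpha>+\<beta>)*j + \<beta>)*(K*j + i)) * qbinom (M + N) (M - K*j - i))"

definition nonneg_coeffs :: "rat fls \<Rightarrow> bool" where
  "nonneg_coeffs P \<longleftrightarrow> (\<forall>n. fls_nth P n \<ge> 0)"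

end

theory Submission
  imports Defs
begin

(* With alpha + beta fixed, the two q-Pascal rules applied termwise give the recurrences
     D(N,M;alpha,beta) = q^N D(N,M-1;alpha-1,beta+1) + D(N-1,M;alpha,beta),
     D(N,M;alpha,beta) = D(N,M-1;alpha,beta) + q^M D(N-1,M;alpha+1,beta-1),
   and D vanishes on the two boundary lines beta = 0, N - M = -i and alpha = 0, N - M = K - i,
   where the reflections j -> -j and j -> -j-1 pair the positive terms with the negative ones.
   In the region beta - i <= N - M <= K - alpha - i with 0 < alpha + beta < K, every point off
   these lines admits one of the recurrences with all arguments staying in the region, and at
   N + M = 0 no negative term survives; induction on N + M gives non-negative coefficients.
   The identity itself is the definition of D at K = p', i = s, alpha = p - r, beta = r. *)

lemma qpow_add: "qpow a * qpow b = qpow (a + b)"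
  by (simp add: qpow_def fls_X_intpow_times_fls_X_intpow)

lemma qpow_0 [simp]: "qpow 0 = 1"
  by (simp add: qpow_def)

lemma fls_nth_qpow_times: "fls_nth (qpow e * f) n = fls_nth f (n - e)"
  by (simp add: qpow_def fls_X_intpow_times_conv_shift)

lemma qpow_eq_1_iff: "qpow e = 1 \<longleftrightarrow> e = 0"
proof
  assume "qpow e = 1"
  then have "fls_nth (qpow e * 1) e = fls_nth 1 e" by simp
  then show "e = 0"
    by (simp only: fls_nth_qpow_times) (simp split: if_splits)
qed (simp add: qpow_def)

lemma qpoch_nonzero: "qpoch n \<noteq> 0"
  unfolding qpoch_def by (auto simp: prod_zero_iff qpow_eq_1_iff)

lemma qpoch_0 [simp]: "qpoch 0 = 1"
  by (simp add: qpoch_def)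

lemma qpoch_Suc: "qpoch (Suc n) = qpoch n * (1 - qpow (int n + 1))"
  by (simp add: qpoch_def)

lemma qbinom_add: "qbinom (int k + int l) (int k) = qpoch (k + l) / (qpoch k * qpoch l)"
  by (simp add: qbinom_def nat_add_distrib)

lemma qbinom_eq_0: "k < 0 \<or> n < k \<Longrightarrow> qbinom n k = 0"
  by (auto simp: qbinom_def)

lemma qbinom_0_left: "qbinom 0 k = (if k = 0 then 1 else 0)"
  by (simp add: qbinom_def)

lemma qbinom_symmetric: "qbinom n k = qbinom n (n - k)"
  by (auto simp: qbinom_def mult.commute)

lemma qbinom_pascal_Suc:
  "qbinom (int (Suc a + Suc b)) (int (Suc a)) =
     qbinom (int (a + Suc b)) (int a) + qpow (int a + 1) * qbinom (int (Suc a + b)) (int (Suc a))"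
proof -
  define x where "x = 1 - qpow (int a + 1)"
  define y where "y = 1 - qpow (int b + 1)"
  define P where "P = qpoch (a + Suc b)"
  have "x \<noteq> 0" "y \<noteq> 0"
    by (simp_all add: x_def y_def qpow_eq_1_iff)
  note nonzero = this qpoch_nonzero[of a] qpoch_nonzero[of b]
  have "1 - qpow (int (a + Suc b) + 1) = x + (1 - x) * y"
    by (simp add: x_def y_def qpow_add algebra_simps)
  then have "qpoch (Suc a + Suc b) = P * (x + (1 - x) * y)"
    by (simp add: P_def qpoch_Suc)
  moreover have "qpoch (Suc a) = qpoch a * x" "qpoch (Suc b) = qpoch b * y"
    by (simp_all add: x_def y_def qpoch_Suc)
  moreover have "qpoch (Suc a + b) = P" by (simp add: P_def)
  ultimately have "qbinom (int (Suc a + Suc b)) (int (Suc a)) =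
      P * (x + (1 - x) * y) / (qpoch a * x * (qpoch b * y))"
    "qbinom (int (a + Suc b)) (int a) = P / (qpoch a * (qpoch b * y))"
    "qbinom (int (Suc a + b)) (int (Suc a)) = P / (qpoch a * x * qpoch b)"
    unfolding of_nat_add qbinom_add by (simp_all add: P_def)
  moreover have "qpow (int a + 1) = 1 - x" by (simp add: x_def)
  moreover have "P * (x + (1 - x) * y) / (qpoch a * x * (qpoch b * y)) =
      P / (qpoch a * (qpoch b * y)) + (1 - x) * (P / (qpoch a * x * qpoch b))"
    using nonzero by (simp add: field_simps)
  ultimately show ?thesis by (simp only:)
qed

lemma qbinom_pascal:
  assumes "n \<ge> 1"
  shows "qbinom n k = qbinom (n - 1) (k - 1) + qpow k * qbinom (n - 1) k"
proof -
  consider "k < 0" | "k = 0" | "k = n" | "k > n" | "0 < k \<and> k < n" by linarith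
  then show ?thesis
  proof cases
    case 5
    define a where "a = nat k - 1"
    define b where "b = nat (n - k) - 1"
    have "k = int (Suc a)" "n = int (Suc a + Suc b)"
      using 5 by (auto simp: a_def b_def)
    then show ?thesis using qbinom_pascal_Suc[of a b] by (simp add: ac_simps)
  qed (use assms in \<open>auto simp: qbinom_def qpoch_nonzero\<close>)
qed

lemma qbinom_pascal':
  assumes "n \<ge> 1"
  shows "qbinom n k = qpow (n - k) * qbinom (n - 1) (k - 1) + qbinom (n - 1) k"
  using qbinom_pascal[OF assms, of "n - k"]
    qbinom_symmetric[of n k] qbinom_symmetric[of "n - 1" k] qbinom_symmetric[of "n - 1" "k - 1"]
  by (simp add: algebra_simps)

lemma nonneg_coeffs_0: "nonneg_coeffs 0"
  by (simp add: nonneg_coeffs_def)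

lemma nonneg_coeffs_add: "nonneg_coeffs f \<Longrightarrow> nonneg_coeffs g \<Longrightarrow> nonneg_coeffs (f + g)"
  by (simp add: nonneg_coeffs_def)

lemma nonneg_coeffs_qpow_times: "nonneg_coeffs f \<Longrightarrow> nonneg_coeffs (qpow e * f)"
  by (simp add: nonneg_coeffs_def fls_nth_qpow_times)

lemma nonneg_coeffs_sum: "(\<And>j. j \<in> S \<Longrightarrow> nonneg_coeffs (f j)) \<Longrightarrow> nonneg_coeffs (\<Sum>j\<in>S. f j)"
  by (auto simp: nonneg_coeffs_def fls_nth_sum intro!: sum_nonneg)

lemma nonneg_coeffs_qbinom_of_nat: "nonneg_coeffs (qbinom (int m) k)"
proof (induction m arbitrary: k)
  case 0
  then show ?case
    by (simp add: qbinom_0_left nonneg_coeffs_def)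
next
  case (Suc m)
  have "qbinom (int (Suc m)) k = qbinom (int m) (k - 1) + qpow k * qbinom (int m) k"
    using qbinom_pascal[of "int (Suc m)" k] by simp
  then show ?case
    by (simp add: nonneg_coeffs_add nonneg_coeffs_qpow_times Suc.IH)
qed

lemma nonneg_coeffs_qbinom: "nonneg_coeffs (qbinom n k)"
proof (cases "n < 0")
  case True
  then show ?thesis
    by (cases "k < 0") (simp_all add: qbinom_eq_0 nonneg_coeffs_0)
next
  case False
  then show ?thesis
    using nonneg_coeffs_qbinom_of_nat nonneg_int_cases by (metis not_less)
qed

definition D_plus_term :: "int \<Rightarrow> int \<Rightarrow> int \<Rightarrow> int \<Rightarrow> int \<Rightarrow> int \<Rightarrow> int \<Rightarrow> rat fls" where
  "D_plus_term K i N M \<alpha> \<beta> j =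
     qpow (j*((\<alpha>+\<beta>)*K*j + K*\<beta> - (\<alpha>+\<beta>)*i)) * qbinom (M + N) (M - K*j)"

definition D_minus_term :: "int \<Rightarrow> int \<Rightarrow> int \<Rightarrow> int \<Rightarrow> int \<Rightarrow> int \<Rightarrow> int \<Rightarrow> rat fls" where
  "D_minus_term K i N M \<alpha> \<beta> j =
     qpow (((\<alpha>+\<beta>)*j + \<beta>)*(K*j + i)) * qbinom (M + N) (M - K*j - i)"

lemma D_eq_terms:
  "D K i N M \<alpha> \<beta> =
     (\<Sum>j\<in>{j. 0 \<le> M - K*j \<and> M - K*j \<le> M + N}. D_plus_term K i N M \<alpha> \<beta> j)
   - (\<Sum>j\<in>{j. 0 \<le> M - K*j - i \<and> M - K*j - i \<le> M + N}. D_minus_term K i N M \<alpha> \<beta> j)"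
  by (simp add: D_def D_plus_term_def D_minus_term_def)

lemma abs_le_if_qbinom_index_in_range:
  fixes K j N M c :: int
  assumes "K \<ge> 1" "0 \<le> M - K*j - c" "M - K*j - c \<le> M + N"
  shows "\<bar>j\<bar> \<le> \<bar>N\<bar> + \<bar>M\<bar> + \<bar>c\<bar>"
proof (cases "j \<ge> 0")
  case True
  then have "j \<le> K*j" using mult_right_mono[of 1 K j] assms(1) by simp
  then show ?thesis using True assms(2) by linarith
next
  case False
  then have "K*j \<le> j" using mult_right_mono_neg[of 1 K j] assms(1) by simp
  then show ?thesis using False assms(3) by linarith
qed

lemma D_eq_sum_superset:
  assumes "K \<ge> 1" "finite S" "{-(\<bar>N\<bar>+\<bar>M\<bar>+\<bar>i\<bar>)..\<bar>N\<bar>+\<bar>M\<bar>+\<bar>i\<bar>} \<subseteq> S"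
  shows "D K i N M \<alpha> \<beta> = (\<Sum>j\<in>S. D_plus_term K i N M \<alpha> \<beta> j - D_minus_term K i N M \<alpha> \<beta> j)"
proof -
  have "(\<Sum>j\<in>{j. 0 \<le> M - K*j - c \<and> M - K*j - c \<le> M + N}. f j) = (\<Sum>j\<in>S. f j)"
    if "\<bar>c\<bar> \<le> \<bar>i\<bar>" and "\<And>j. M - K*j - c < 0 \<or> M + N < M - K*j - c \<Longrightarrow> f j = 0"
    for c and f :: "int \<Rightarrow> rat fls"
  proof (rule sum.mono_neutral_left[OF assms(2)])
    show "{j. 0 \<le> M - K*j - c \<and> M - K*j - c \<le> M + N} \<subseteq> S"
      using abs_le_if_qbinom_index_in_range[OF assms(1)] that(1) assms(3) by fastforce
  qed (intro ballI that(2), auto)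
  from this[of 0] this[of i] show ?thesis
    unfolding D_eq_terms sum_subtractf
    by (simp add: D_plus_term_def D_minus_term_def qbinom_eq_0)
qed

lemma D_plus_term_recurrence_qpow_N:
  assumes "N + M \<ge> 1"
  shows "D_plus_term K i N M \<alpha> \<beta> j =
    qpow N * D_plus_term K i N (M - 1) (\<alpha> - 1) (\<beta> + 1) j + D_plus_term K i (N - 1) M \<alpha> \<beta> j"
proof -
  have "qbinom (M + N) (M - K*j) =
      qpow (N + K*j) * qbinom (M - 1 + N) (M - 1 - K*j) + qbinom (M + (N - 1)) (M - K*j)"
    using qbinom_pascal'[of "M + N" "M - K*j"] assms by (simp add: algebra_simps)
  moreover have "qpow (j*((\<alpha>+\<beta>)*K*j + K*\<beta> - (\<alpha>+\<beta>)*i)) * qpow (N + K*j) =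
      qpow N * qpow (j*((\<alpha>-1+(\<beta>+1))*K*j + K*(\<beta>+1) - (\<alpha>-1+(\<beta>+1))*i))"
    unfolding qpow_add by (simp add: algebra_simps)
  ultimately show ?thesis
    unfolding D_plus_term_def by (simp only: distrib_left mult.assoc[symmetric])
qed

lemma D_minus_term_recurrence_qpow_N:
  assumes "N + M \<ge> 1"
  shows "D_minus_term K i N M \<alpha> \<beta> j =
    qpow N * D_minus_term K i N (M - 1) (\<alpha> - 1) (\<beta> + 1) j + D_minus_term K i (N - 1) M \<alpha> \<beta> j"
proof -
  have "qbinom (M + N) (M - K*j - i) =
      qpow (N + K*j + i) * qbinom (M - 1 + N) (M - 1 - K*j - i) + qbinom (M + (N - 1)) (M - K*j - i)"
    using qbinom_pascal'[of "M + N" "M - K*j - i"] assms by (simp add: algebra_simps)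
  moreover have "qpow (((\<alpha>+\<beta>)*j + \<beta>)*(K*j + i)) * qpow (N + K*j + i) =
      qpow N * qpow (((\<alpha>-1+(\<beta>+1))*j + (\<beta>+1))*(K*j + i))"
    unfolding qpow_add by (simp add: algebra_simps)
  ultimately show ?thesis
    unfolding D_minus_term_def by (simp only: distrib_left mult.assoc[symmetric])
qed

lemma D_plus_term_recurrence_qpow_M:
  assumes "N + M \<ge> 1"
  shows "D_plus_term K i N M \<alpha> \<beta> j =
    D_plus_term K i N (M - 1) \<alpha> \<beta> j + qpow M * D_plus_term K i (N - 1) M (\<alpha> + 1) (\<beta> - 1) j"
proof -
  have "qbinom (M + N) (M - K*j) =
      qbinom (M - 1 + N) (M - 1 - K*j) + qpow (M - K*j) * qbinom (M + (N - 1)) (M - K*j)"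
    using qbinom_pascal[of "M + N" "M - K*j"] assms by (simp add: algebra_simps)
  moreover have "qpow (j*((\<alpha>+\<beta>)*K*j + K*\<beta> - (\<alpha>+\<beta>)*i)) * qpow (M - K*j) =
      qpow M * qpow (j*((\<alpha>+1+(\<beta>-1))*K*j + K*(\<beta>-1) - (\<alpha>+1+(\<beta>-1))*i))"
    unfolding qpow_add by (simp add: algebra_simps)
  ultimately show ?thesis
    unfolding D_plus_term_def by (simp only: distrib_left mult.assoc[symmetric])
qed

lemma D_minus_term_recurrence_qpow_M:
  assumes "N + M \<ge> 1"
  shows "D_minus_term K i N M \<alpha> \<beta> j =
    D_minus_term K i N (M - 1) \<alpha> \<beta> j + qpow M * D_minus_term K i (N - 1) M (\<alpha> + 1) (\<beta> - 1) j"
proof -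
  have "qbinom (M + N) (M - K*j - i) =
      qbinom (M - 1 + N) (M - 1 - K*j - i) + qpow (M - K*j - i) * qbinom (M + (N - 1)) (M - K*j - i)"
    using qbinom_pascal[of "M + N" "M - K*j - i"] assms by (simp add: algebra_simps)
  moreover have "qpow (((\<alpha>+\<beta>)*j + \<beta>)*(K*j + i)) * qpow (M - K*j - i) =
      qpow M * qpow (((\<alpha>+1+(\<beta>-1))*j + (\<beta>-1))*(K*j + i))"
    unfolding qpow_add by (simp add: algebra_simps)
  ultimately show ?thesis
    unfolding D_minus_term_def by (simp only: distrib_left mult.assoc[symmetric])
qed

lemma D_recurrence_qpow_N:
  assumes "K \<ge> 1" "N + M \<ge> 1"
  shows "D K i N M \<alpha> \<beta> = qpow N * D K i N (M - 1) (\<alpha> - 1) (\<beta> + 1) + D K i (N - 1) M \<alpha> \<beta>"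
proof -
  define S where "S = {-(\<bar>N\<bar>+\<bar>M\<bar>+\<bar>i\<bar>+1)..\<bar>N\<bar>+\<bar>M\<bar>+\<bar>i\<bar>+1}"
  have "D K i N M \<alpha> \<beta> = (\<Sum>j\<in>S. D_plus_term K i N M \<alpha> \<beta> j - D_minus_term K i N M \<alpha> \<beta> j)"
    "D K i N (M - 1) (\<alpha> - 1) (\<beta> + 1) = (\<Sum>j\<in>S.
       D_plus_term K i N (M - 1) (\<alpha> - 1) (\<beta> + 1) j - D_minus_term K i N (M - 1) (\<alpha> - 1) (\<beta> + 1) j)"
    "D K i (N - 1) M \<alpha> \<beta> = (\<Sum>j\<in>S. D_plus_term K i (N - 1) M \<alpha> \<beta> j - D_minus_term K i (N - 1) M \<alpha> \<beta> j)"
    by (rule D_eq_sum_superset[OF assms(1)]; force simp: S_def)+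
  note sums = this
  show ?thesis
    unfolding sums sum_distrib_left sum.distrib[symmetric]
    by (rule sum.cong[OF refl])
      (simp add: D_plus_term_recurrence_qpow_N[OF assms(2)] D_minus_term_recurrence_qpow_N[OF assms(2)]
        algebra_simps)
qed

lemma D_recurrence_qpow_M:
  assumes "K \<ge> 1" "N + M \<ge> 1"
  shows "D K i N M \<alpha> \<beta> = D K i N (M - 1) \<alpha> \<beta> + qpow M * D K i (N - 1) M (\<alpha> + 1) (\<beta> - 1)"
proof -
  define S where "S = {-(\<bar>N\<bar>+\<bar>M\<bar>+\<bar>i\<bar>+1)..\<bar>N\<bar>+\<bar>M\<bar>+\<bar>i\<bar>+1}"
  have "D K i N M \<alpha> \<beta> = (\<Sum>j\<in>S. D_plus_term K i N M \<alpha> \<beta> j - D_minus_term K i N M \<alpha> \<beta> j)"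
    "D K i N (M - 1) \<alpha> \<beta> = (\<Sum>j\<in>S. D_plus_term K i N (M - 1) \<alpha> \<beta> j - D_minus_term K i N (M - 1) \<alpha> \<beta> j)"
    "D K i (N - 1) M (\<alpha> + 1) (\<beta> - 1) = (\<Sum>j\<in>S.
       D_plus_term K i (N - 1) M (\<alpha> + 1) (\<beta> - 1) j - D_minus_term K i (N - 1) M (\<alpha> + 1) (\<beta> - 1) j)"
    by (rule D_eq_sum_superset[OF assms(1)]; force simp: S_def)+
  note sums = this
  show ?thesis
    unfolding sums sum_distrib_left sum.distrib[symmetric]
    by (rule sum.cong[OF refl])
      (simp add: D_plus_term_recurrence_qpow_M[OF assms(2)] D_minus_term_recurrence_qpow_M[OF assms(2)]
        algebra_simps)
qed

lemma D_eq_0_if_beta_0: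
  assumes "K \<ge> 1" "N - M + i = 0"
  shows "D K i N M \<alpha> 0 = 0"
proof -
  define B where "B = \<bar>N\<bar> + \<bar>M\<bar> + \<bar>i\<bar>"
  have "D_minus_term K i N M \<alpha> 0 (-j) = D_plus_term K i N M \<alpha> 0 j" for j
  proof -
    have "qbinom (M + N) (M - K*(-j) - i) = qbinom (M + N) (M - K*j)"
      using qbinom_symmetric[of "M + N" "M - K*(-j) - i"] assms(2) by (simp add: algebra_simps)
    then show ?thesis
      unfolding D_plus_term_def D_minus_term_def by (simp add: algebra_simps)
  qed
  then have "(\<Sum>j\<in>{-B..B}. D_plus_term K i N M \<alpha> 0 j) = (\<Sum>j\<in>{-B..B}. D_minus_term K i N M \<alpha> 0 j)"
    by (intro sum.reindex_bij_witness[of _ uminus uminus]) auto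
  moreover have "D K i N M \<alpha> 0 =
      (\<Sum>j\<in>{-B..B}. D_plus_term K i N M \<alpha> 0 j - D_minus_term K i N M \<alpha> 0 j)"
    by (rule D_eq_sum_superset[OF assms(1)]) (auto simp: B_def)
  ultimately show ?thesis
    by (simp add: sum_subtractf)
qed

lemma D_eq_0_if_alpha_0:
  assumes "K \<ge> 1" "N - M + i = K"
  shows "D K i N M 0 \<beta> = 0"
proof -
  define B where "B = \<bar>N\<bar> + \<bar>M\<bar> + \<bar>i\<bar>"
  have "D_minus_term K i N M 0 \<beta> (-j-1) = D_plus_term K i N M 0 \<beta> j" for j
  proof -
    have "qbinom (M + N) (M - K*(-j-1) - i) = qbinom (M + N) (M - K*j)"
      using qbinom_symmetric[of "M + N" "M - K*(-j-1) - i"] assms(2) by (simp add: algebra_simps)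
    then show ?thesis
      unfolding D_plus_term_def D_minus_term_def by (simp add: algebra_simps)
  qed
  then have "(\<Sum>j\<in>{-B-1..B}. D_plus_term K i N M 0 \<beta> j) = (\<Sum>j\<in>{-B-1..B}. D_minus_term K i N M 0 \<beta> j)"
    by (intro sum.reindex_bij_witness[of _ "\<lambda>j. -j-1" "\<lambda>j. -j-1"]) auto
  moreover have "D K i N M 0 \<beta> =
      (\<Sum>j\<in>{-B-1..B}. D_plus_term K i N M 0 \<beta> j - D_minus_term K i N M 0 \<beta> j)"
    by (rule D_eq_sum_superset[OF assms(1)]) (auto simp: B_def)
  ultimately show ?thesis
    by (simp add: sum_subtractf)
qed

lemma D_nonneg_coeffs_if_N_plus_M_0:
  assumes "N + M = 0" "0 \<le> \<alpha>" "0 \<le> \<beta>" "0 < i" "i < K" "\<beta> - i \<le> N - M" "N - M \<le> K - \<alpha> - i"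
  shows "nonneg_coeffs (D K i N M \<alpha> \<beta>)"
proof -
  have "\<not> (0 \<le> M - K*j - i \<and> M - K*j - i \<le> M + N)" for j
  proof
    assume "0 \<le> M - K*j - i \<and> M - K*j - i \<le> M + N"
    then have "M - K*j - i = 0"
      using assms(1) by linarith
    moreover have "K*j \<ge> 0 \<or> K*j \<le> -K"
      using assms(4,5) mult_left_mono[of j "-1" K] by (cases "j \<ge> 0") auto
    ultimately show False
      using assms by linarith
  qed
  then have no_minus_terms: "{j. 0 \<le> M - K*j - i \<and> M - K*j - i \<le> M + N} = {}"
    by blast
  show ?thesis
    unfolding D_eq_terms no_minus_terms sum.empty diff_zero D_plus_term_def
    by (intro nonneg_coeffs_sum nonneg_coeffs_qpow_times nonneg_coeffs_qbinom)
qed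

lemma D_nonneg_coeffs:
  assumes "0 \<le> \<alpha>" "0 \<le> \<beta>" "0 < \<alpha> + \<beta>" "\<alpha> + \<beta> < K" "0 < i" "i < K"
    and "\<beta> - i \<le> N - M" "N - M \<le> K - \<alpha> - i" "0 \<le> N + M"
  shows "nonneg_coeffs (D K i N M \<alpha> \<beta>)"
proof -
  have K: "K \<ge> 1"
    using assms(5,6) by simp
  obtain n where "N + M = int n"
    using assms(9) nonneg_int_cases by metis
  then show ?thesis
    using assms(1-4,7,8)
  proof (induction n arbitrary: N M \<alpha> \<beta>)
    case 0
    then show ?case
      using D_nonneg_coeffs_if_N_plus_M_0 assms(5,6) by simp
  next
    case (Suc n)
    then have NM: "N + M \<ge> 1"
      by simp
    consider "\<beta> = 0 \<and> N - M + i = 0" | "\<alpha> = 0 \<and> N - M + i = K"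
      | "0 < \<beta> \<and> N - M - \<beta> + i < K - \<alpha> - \<beta>" | "0 < \<alpha> \<and> \<beta> - i < N - M"
      using Suc.prems by linarith
    then show ?case
    proof cases
      case 1
      then show ?thesis
        using D_eq_0_if_beta_0[OF K] nonneg_coeffs_0 by auto
    next
      case 2
      then show ?thesis
        using D_eq_0_if_alpha_0[OF K] nonneg_coeffs_0 by auto
    next
      case 3
      show ?thesis
        unfolding D_recurrence_qpow_M[OF K NM]
        by (intro nonneg_coeffs_add nonneg_coeffs_qpow_times Suc.IH) (use Suc.prems 3 in auto)
    next
      case 4
      show ?thesis
        unfolding D_recurrence_qpow_N[OF K NM]
        by (intro nonneg_coeffs_add nonneg_coeffs_qpow_times Suc.IH) (use Suc.prems 4 in auto)
    qed
  qed
qed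

lemma D_p_minus_r_r_eq:
  "D K i N M (p - r) r =
     (\<Sum>j\<in>{j. 0 \<le> M - j*K \<and> M - j*K \<le> N + M}.
        qpow (j^2*p*K + (r*K - i*p)*j) * qbinom (N + M) (M - j*K))
   - (\<Sum>j\<in>{j. 0 \<le> M - i - j*K \<and> M - i - j*K \<le> N + M}.
        qpow ((j*p + r)*(j*K + i)) * qbinom (N + M) (M - i - j*K))"
  unfolding D_def by (simp add: power2_eq_square algebra_simps)

lemma floor_of_int_half: "\<lfloor>of_int x / (2::rat)\<rfloor> = x div 2"
  using floor_divide_of_int_eq[of x 2] by simp

lemma ceiling_of_int_half: "\<lceil>of_int x / (2::rat)\<rceil> = - ((- x) div 2)"
  unfolding ceiling_def using floor_of_int_half[of "- x"] by simp

theorem theorem2p2: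
  fixes L p' p r s :: int
  assumes "L \<ge> 0" and "p > 0" and "p' > 0" and "p' > p"
    and "0 < r" and "r < p" and "0 < s" and "s < p'"
  shows "D p' s \<lceil>of_int (L + r - s) / (2::rat)\<rceil> \<lfloor>of_int (L - r + s) / (2::rat)\<rfloor> (p - r) r =
           (\<Sum>j\<in>{j. 0 \<le> \<lfloor>of_int (L - r + s) / (2::rat)\<rfloor> - j*p' \<and> \<lfloor>of_int (L - r + s) / (2::rat)\<rfloor> - j*p' \<le> L}.
              qpow (j^2*p*p' + (r*p' - s*p)*j) * qbinom L (\<lfloor>of_int (L - r + s) / (2::rat)\<rfloor> - j*p'))
         - (\<Sum>j\<in>{j. 0 \<le> \<lfloor>of_int (L - r - s) / (2::rat)\<rfloor> - j*p' \<and> \<lfloor>of_int (L - r - s) / (2::rat)\<rfloor> - j*p' \<le> L}.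
              qpow ((j*p + r)*(j*p' + s)) * qbinom L (\<lfloor>of_int (L - r - s) / (2::rat)\<rfloor> - j*p'))
       \<and> nonneg_coeffs (D p' s \<lceil>of_int (L + r - s) / (2::rat)\<rceil> \<lfloor>of_int (L - r + s) / (2::rat)\<rfloor> (p - r) r)"
proof -
  define M where "M = (L - r + s) div 2"
  define N where "N = - ((- (L + r - s)) div 2)"
  have floors: "\<lceil>of_int (L + r - s) / (2::rat)\<rceil> = N" "\<lfloor>of_int (L - r + s) / (2::rat)\<rfloor> = M"
    "\<lfloor>of_int (L - r - s) / (2::rat)\<rfloor> = M - s"
    unfolding floor_of_int_half ceiling_of_int_half M_def N_def by presburger+
  have L: "L = N + M" and "0 \<le> N - M - r + s" "N - M - r + s \<le> 1"
    unfolding M_def N_def by presburger+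
  then have "nonneg_coeffs (D p' s N M (p - r) r)"
    using assms by (intro D_nonneg_coeffs) auto
  then show ?thesis
    unfolding floors unfolding L by (simp add: D_p_minus_r_r_eq)
qed

end
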